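(* Let $\mathbf A$ be a pseudo-Kleene lattice, and define $x\odot y=0$ if $x\leq y'$ and $x\odot y=y\land(x\lor y')$ otherwise; $x\to y=1$ if $x\leq y$ and $x\to y=x'\lor(x\land y)$ otherwise. The following are equivalent: (1) $R(\mathbf A)=(A,\land,\lor,\odot,\to,0,1)$ is a left-residuated $\ell$-groupoid; (2) $\mathbf A$ is super-paraorthomodular and, for all $x,y\in A$, if $x\not\leq y$ then $x\leq y\lor y'$ or $y'\leq x\lor y$.
   Context: A pseudo-Kleene lattice is an algebra $(A,\land,\lor,{}',0,1)$ that is a bounded lattice with an antitone involution ${}'$ ($x\leq y\Rightarrow y'\leq x'$, $x''=x$) satisfying $x\land x'\leq y\lor y'$. It is super-paraorthomodular if for all $x,y$: (SP1) $x\leq y$ and $x'\land y=(x\land x')\lor(y\land y')$ imply $y\land(x\lor x')=x\lor(y\land y')$; (SP2) $x\leq y$ implies $(x\land x')\lor(y\land y')=(x'\land y)\land(x'\land y)'$. A left-residuated $\ell$-groupoid is an algebra $(A,\land,\lor,\odot,\to,0,1)$ such that $(A,\land,\lor,0,1)$ is a bounded lattice, $x\odot 1=x=1\odot x$ for all $x$, and $x\odot y\leq z$ iff $x\leq y\to z$ for all $x,y,z$. *)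

theory Defs
  imports Main
begin

text \<open>A bounded lattice is modelled by the type class bounded_lattice
  (0 = bot, 1 = top, meet = inf, join = sup). The unary operation x' is a
  function n.\<close>

definition pseudo_kleene :: "('a::bounded_lattice \<Rightarrow> 'a) \<Rightarrow> bool" where
  "pseudo_kleene n \<longleftrightarrow>
     (\<forall>x y. x \<le> y \<longrightarrow> n y \<le> n x) \<and>
     (\<forall>x. n (n x) = x) \<and>
     (\<forall>x y. inf x (n x) \<le> sup y (n y))"

definition super_paraorthomodular :: "('a::bounded_lattice \<Rightarrow> 'a) \<Rightarrow> bool" where
  "super_paraorthomodular n \<longleftrightarrow>
     (\<forall>x y. x \<le> y \<and> inf (n x) y = sup (inf x (n x)) (inf y (n y))
            \<longrightarrow> inf y (sup x (n x)) = sup x (inf y (n y))) \<and>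
     (\<forall>x y. x \<le> y \<longrightarrow>
            sup (inf x (n x)) (inf y (n y)) = inf (inf (n x) y) (n (inf (n x) y)))"

definition R_mult :: "('a::bounded_lattice \<Rightarrow> 'a) \<Rightarrow> 'a \<Rightarrow> 'a \<Rightarrow> 'a" where
  "R_mult n x y = (if x \<le> n y then bot else inf y (sup x (n y)))"

definition R_imp :: "('a::bounded_lattice \<Rightarrow> 'a) \<Rightarrow> 'a \<Rightarrow> 'a \<Rightarrow> 'a" where
  "R_imp n x y = (if x \<le> y then top else sup (n x) (inf x y))"

definition left_residuated_l_groupoid ::
  "('a::bounded_lattice \<Rightarrow> 'a \<Rightarrow> 'a) \<Rightarrow> ('a \<Rightarrow> 'a \<Rightarrow> 'a) \<Rightarrow> bool" where
  "left_residuated_l_groupoid m r \<longleftrightarrow>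
     (\<forall>x. m x top = x \<and> m top x = x) \<and>
     (\<forall>x y z. m x y \<le> z \<longleftrightarrow> x \<le> r y z)"

end

theory Submission
  imports Defs
begin

text \<open>Apart from trivial cases, the residuation law of R(A) reads
  y \<sqinter> (x \<squnion> y') \<le> z \<longleftrightarrow> x \<le> y' \<squnion> (y \<sqinter> z)
  for y not below z and x not below y', and this is equivalent to the
  orthomodular law b = a \<squnion> (a' \<sqinter> b) restricted to those a \<le> b with
  a' not below b. This restricted law implies the dichotomy of the theorem and,
  together with the Kleene inequality, both axioms of super-paraorthomodularity.
  Conversely, for a \<le> b with a' not below b put z = a \<squnion> (a' \<sqinter> b).
  If b were not below z, the dichotomy for b and z would leave two cases:
  either b \<le> z \<squnion> z', where (SP2) for z \<le> b yields the hypothesis of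
  (SP1), and (SP1) gives b \<le> z; or z' \<le> b, where two more instances of
  the dichotomy give b \<le> z again.\<close>

locale pseudo_kleene_lattice =
  fixes n :: "'a::bounded_lattice \<Rightarrow> 'a"
  assumes pseudo_kleene: "pseudo_kleene n"
begin

lemma n_antimono: "x \<le> y \<Longrightarrow> n y \<le> n x"
  using pseudo_kleene unfolding pseudo_kleene_def by blast

lemma n_n [simp]: "n (n x) = x"
  using pseudo_kleene unfolding pseudo_kleene_def by blast

lemma kleene: "inf x (n x) \<le> sup y (n y)"
  using pseudo_kleene unfolding pseudo_kleene_def by blast

lemma n_le_n_iff [simp]: "n x \<le> n y \<longleftrightarrow> y \<le> x"
  by (metis n_antimono n_n)

lemma le_n_iff: "x \<le> n y \<longleftrightarrow> y \<le> n x"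
  by (metis n_le_n_iff n_n)

lemma n_sup [simp]: "n (sup x y) = inf (n x) (n y)"
proof (rule antisym)
  show "n (sup x y) \<le> inf (n x) (n y)"
    by (simp add: n_antimono)
  show "inf (n x) (n y) \<le> n (sup x y)"
    by (metis le_n_iff le_inf_iff le_sup_iff order_refl)
qed

lemma n_inf [simp]: "n (inf x y) = sup (n x) (n y)"
  by (metis n_n n_sup)

lemma n_top [simp]: "n top = bot"
  by (metis bot_unique n_le_n_iff n_n top_greatest)

text \<open>The orthomodular law, demanded only when a' is not below b; stated as an
  inequality since a \<squnion> (a' \<sqinter> b) \<le> b holds anyway.\<close>
definition conditionally_orthomodular :: bool where
  "conditionally_orthomodular \<longleftrightarrow>
     (\<forall>a b. a \<le> b \<longrightarrow> \<not> n a \<le> b \<longrightarrow> b \<le> sup a (inf (n a) b))"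

definition dichotomous :: bool where
  "dichotomous \<longleftrightarrow> (\<forall>x y. \<not> x \<le> y \<longrightarrow> x \<le> sup y (n y) \<or> n y \<le> sup x y)"

lemma conditionally_orthomodularD:
  "conditionally_orthomodular \<Longrightarrow> a \<le> b \<Longrightarrow> \<not> n a \<le> b \<Longrightarrow> b \<le> sup a (inf (n a) b)"
  unfolding conditionally_orthomodular_def by blast

lemma conditionally_orthomodularD_dual:
  assumes "conditionally_orthomodular" "c \<le> d" "\<not> c \<le> n d"
  shows "inf d (sup (n d) c) \<le> c"
proof -
  have "n c \<le> sup (n d) (inf d (n c))"
    using conditionally_orthomodularD [of "n d" "n c"] assms by (simp add: le_n_iff)
  then show ?thesis
    by (metis n_le_n_iff n_n n_inf n_sup)
qed

lemma dichotomousD: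
  "dichotomous \<Longrightarrow> \<not> x \<le> y \<Longrightarrow> x \<le> sup y (n y) \<or> n y \<le> sup x y"
  unfolding dichotomous_def by blast

lemma R_mult_top_right: "R_mult n x top = x"
  by (auto simp: R_mult_def bot_unique)

lemma R_mult_top_left: "R_mult n top x = x"
  by (auto simp: R_mult_def le_n_iff [of top] bot_unique)

lemma R_mult_le: "R_mult n x y \<le> y"
  by (simp add: R_mult_def)

lemma residuation_main_case_iff:
  assumes com: "conditionally_orthomodular" and yz: "\<not> y \<le> z" and xy: "\<not> x \<le> n y"
  shows "inf y (sup x (n y)) \<le> z \<longleftrightarrow> x \<le> sup (n y) (inf y z)"
proof
  assume le_z: "inf y (sup x (n y)) \<le> z"
  have "\<not> y \<le> sup x (n y)"
    using le_z yz by (metis inf.absorb1)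
  then have "sup x (n y) \<le> sup (n y) (inf y (sup x (n y)))"
    using conditionally_orthomodularD [OF com, of "n y" "sup x (n y)"] by simp
  also have "\<dots> \<le> sup (n y) (inf y z)"
    using le_z by (simp add: le_supI2)
  finally show "x \<le> sup (n y) (inf y z)"
    by simp
next
  assume le_imp: "x \<le> sup (n y) (inf y z)"
  have "\<not> inf y z \<le> n y"
    using le_imp xy by (metis sup.absorb1)
  then have "inf y (sup (n y) (inf y z)) \<le> inf y z"
    using conditionally_orthomodularD_dual [OF com, of "inf y z" y] by simp
  moreover have "inf y (sup x (n y)) \<le> inf y (sup (n y) (inf y z))"
    using le_imp by (simp add: le_infI2)
  ultimately show "inf y (sup x (n y)) \<le> z"
    by (meson order_trans inf_le2)
qed

lemma residuated_imp_conditionally_orthomodular: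
  assumes "left_residuated_l_groupoid (R_mult n) (R_imp n)"
  shows conditionally_orthomodular
  unfolding conditionally_orthomodular_def
proof (intro allI impI)
  fix a b
  assume ab: "a \<le> b" and nab: "\<not> n a \<le> b"
  show "b \<le> sup a (inf (n a) b)"
  proof (cases "b \<le> a")
    case False
    have "R_mult n b (n a) \<le> inf (n a) b \<longleftrightarrow> b \<le> R_imp n (n a) (inf (n a) b)"
      using assms unfolding left_residuated_l_groupoid_def by blast
    moreover have "R_mult n b (n a) = inf (n a) b"
      using ab False by (simp add: R_mult_def sup.absorb1)
    moreover have "R_imp n (n a) (inf (n a) b) = sup a (inf (n a) b)"
      using nab by (simp add: R_imp_def inf.absorb2)
    ultimately show ?thesis
      by simp
  qed (simp add: le_supI1)
qed

lemma conditionally_orthomodular_imp_residuated: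
  assumes com: conditionally_orthomodular
  shows "left_residuated_l_groupoid (R_mult n) (R_imp n)"
  unfolding left_residuated_l_groupoid_def
proof (intro conjI allI)
  fix x y z
  show "R_mult n x y \<le> z \<longleftrightarrow> x \<le> R_imp n y z"
  proof (cases "y \<le> z")
    case True
    then show ?thesis
      using R_mult_le [of x y] by (simp add: R_imp_def order_trans)
  next
    case False
    then show ?thesis
      using residuation_main_case_iff [OF com False]
      by (simp add: R_mult_def R_imp_def le_supI1)
  qed
qed (simp_all add: R_mult_top_right R_mult_top_left)

theorem residuated_iff_conditionally_orthomodular:
  "left_residuated_l_groupoid (R_mult n) (R_imp n) \<longleftrightarrow> conditionally_orthomodular"
  using residuated_imp_conditionally_orthomodular conditionally_orthomodular_imp_residuated
  by blast

lemma conditionally_orthomodular_imp_dichotomous: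
  assumes com: conditionally_orthomodular
  shows dichotomous
  unfolding dichotomous_def
proof (intro allI impI)
  fix x y :: 'a
  assume "\<not> x \<le> y"
  show "x \<le> sup y (n y) \<or> n y \<le> sup x y"
  proof (rule disjCI)
    assume "\<not> n y \<le> sup x y"
    then have "sup x y \<le> sup y (inf (n y) (sup x y))"
      using conditionally_orthomodularD [OF com, of y "sup x y"] by simp
    also have "\<dots> \<le> sup y (n y)"
      by (simp add: le_supI2)
    finally show "x \<le> sup y (n y)"
      by simp
  qed
qed

lemma conditionally_orthomodular_SP1:
  assumes com: conditionally_orthomodular and xy: "x \<le> y"
    and hyp: "inf (n x) y = sup (inf x (n x)) (inf y (n y))"
  shows "inf y (sup x (n x)) = sup x (inf y (n y))"
proof (rule antisym)
  have nxy: "inf (n x) y \<le> sup x (inf y (n y))"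
    unfolding hyp by (simp add: le_supI1)
  show "inf y (sup x (n x)) \<le> sup x (inf y (n y))"
  proof (cases "n x \<le> y")
    case True
    then have "sup x (n x) \<le> sup x (inf y (n y))"
      using nxy by (simp add: inf.absorb1)
    then show ?thesis
      by (simp add: le_infI2)
  next
    case False
    then have "y \<le> sup x (inf (n x) y)"
      using conditionally_orthomodularD [OF com xy] by simp
    also have "\<dots> \<le> sup x (inf y (n y))"
      using nxy by simp
    finally show ?thesis
      by (simp add: le_infI1)
  qed
  show "sup x (inf y (n y)) \<le> inf y (sup x (n x))"
    using xy kleene [of y x] by simp
qed

lemma conditionally_orthomodular_SP2:
  assumes com: conditionally_orthomodular and xy: "x \<le> y"
  shows "sup (inf x (n x)) (inf y (n y)) = inf (inf (n x) y) (n (inf (n x) y))"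
proof (rule antisym)
  show "sup (inf x (n x)) (inf y (n y)) \<le> inf (inf (n x) y) (n (inf (n x) y))"
  proof -
    have "inf x (n x) \<le> inf (inf (n x) y) (sup x (n y))"
      using xy by (meson inf_le1 inf_le2 le_inf_iff le_supI1 order_trans)
    moreover have "inf y (n y) \<le> inf (inf (n x) y) (sup x (n y))"
      using n_antimono [OF xy] by (meson inf_le1 inf_le2 le_inf_iff le_supI2 order_trans)
    ultimately show ?thesis
      by simp
  qed
  define w where "w = inf (n x) y"
  have "inf w (n w) \<le> sup (inf x (n x)) (inf y (n y))"
  proof (cases "n x \<le> y")
    case True
    then have "w = n x"
      by (simp add: w_def inf.absorb1)
    then show ?thesis
      by (simp add: inf_commute le_supI1)
  next
    case False
    then have "y \<le> sup x w"
      using conditionally_orthomodularD [OF com xy] by (simp add: w_def)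
    then have "inf (n x) (n w) \<le> n y"
      using n_antimono by fastforce
    moreover have "w \<le> n x" "w \<le> y"
      by (simp_all add: w_def)
    ultimately have "inf w (n w) \<le> inf y (n y)"
      by (meson inf_mono le_inf_iff order_refl order_trans)
    then show ?thesis
      by (simp add: le_supI2)
  qed
  then show "inf (inf (n x) y) (n (inf (n x) y)) \<le> sup (inf x (n x)) (inf y (n y))"
    by (simp add: w_def)
qed

lemma conditionally_orthomodular_imp_super_paraorthomodular:
  "conditionally_orthomodular \<Longrightarrow> super_paraorthomodular n"
  unfolding super_paraorthomodular_def
  using conditionally_orthomodular_SP1 conditionally_orthomodular_SP2 by blast

lemma dichotomous_le_sup_n:
  assumes dich: dichotomous and ab: "a \<le> b" and nab: "\<not> n a \<le> b"
  shows "b \<le> sup a (n a)"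
proof (cases "b \<le> a")
  case False
  then show ?thesis
    using dichotomousD [OF dich False] ab nab by (simp add: sup.absorb1)
qed (simp add: le_supI1)

lemma super_paraorthomodularD1:
  "super_paraorthomodular n \<Longrightarrow> x \<le> y \<Longrightarrow>
    inf (n x) y = sup (inf x (n x)) (inf y (n y)) \<Longrightarrow>
    inf y (sup x (n x)) = sup x (inf y (n y))"
  unfolding super_paraorthomodular_def by blast

lemma super_paraorthomodularD2:
  "super_paraorthomodular n \<Longrightarrow> x \<le> y \<Longrightarrow>
    sup (inf x (n x)) (inf y (n y)) = inf (inf (n x) y) (n (inf (n x) y))"
  unfolding super_paraorthomodular_def by blast

lemma super_paraorthomodular_absorb:
  assumes sp: "super_paraorthomodular n" and ab: "a \<le> b"
    and z_def: "z = sup a (inf (n a) b)" and b_le: "b \<le> sup z (n z)"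
  shows "b \<le> z"
proof -
  have zb: "z \<le> b"
    using ab by (simp add: z_def)
  define w where "w = inf (n a) b"
  have u: "inf (n z) b = inf w (n w)"
    by (simp add: z_def w_def inf.assoc inf.commute inf.left_commute)
  have "inf w (n w) \<le> n (inf w (n w))"
    by (simp add: le_infI1)
  then have "inf (n z) b = inf (inf (n z) b) (n (inf (n z) b))"
    unfolding u by (rule inf.absorb1 [symmetric])
  also have "\<dots> = sup (inf z (n z)) (inf b (n b))"
    by (rule super_paraorthomodularD2 [OF sp zb, symmetric])
  finally have "inf b (sup z (n z)) = sup z (inf b (n b))"
    by (rule super_paraorthomodularD1 [OF sp zb])
  moreover have "inf b (n b) \<le> z"
  proof -
    have "inf b (n b) \<le> inf (n a) b"
      using ab by (simp add: le_infI2)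
    then show ?thesis
      by (simp add: z_def le_supI2)
  qed
  ultimately have "inf b (sup z (n z)) = z"
    by (simp add: sup.absorb1)
  then show ?thesis
    using b_le by (simp add: inf.absorb1)
qed

lemma dichotomous_absorb:
  assumes dich: dichotomous and ab: "a \<le> b" and nab: "\<not> n a \<le> b"
    and z_def: "z = sup a (inf (n a) b)" and nz_le: "n z \<le> b"
  shows "b \<le> z"
proof -
  have nz_le_na: "n z \<le> n a"
    by (simp add: z_def)
  then have nz_le_z: "n z \<le> z"
    using nz_le by (simp add: z_def le_supI2)
  have "\<not> n a \<le> n z"
    using nz_le nab order_trans by blast
  then have "n a \<le> sup (n z) z \<or> z \<le> sup (n a) (n z)"
    using dichotomousD [OF dich] by fastforce
  then have "n a \<le> z \<or> z \<le> n a"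
    using nz_le_z nz_le_na by (simp add: sup.absorb1 sup.absorb2)
  then show ?thesis
  proof
    assume "n a \<le> z"
    then have "sup a (n a) \<le> z"
      by (simp add: z_def)
    then show ?thesis
      using dichotomous_le_sup_n [OF dich ab nab] order_trans by blast
  next
    assume "z \<le> n a"
    then have "b \<le> n a"
      using dichotomous_le_sup_n [OF dich ab nab] by (simp add: z_def sup.absorb2)
    then show ?thesis
      by (simp add: z_def inf.absorb2)
  qed
qed

lemma super_paraorthomodular_dichotomous_imp_conditionally_orthomodular:
  assumes sp: "super_paraorthomodular n" and dich: dichotomous
  shows conditionally_orthomodular
  unfolding conditionally_orthomodular_def
proof (intro allI impI)
  fix a b
  assume ab: "a \<le> b" and nab: "\<not> n a \<le> b"
  define z where "z = sup a (inf (n a) b)"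
  have "b \<le> z"
  proof (rule ccontr)
    assume bz: "\<not> b \<le> z"
    have "sup b z = b"
      using ab by (simp add: z_def sup.absorb1)
    then have "b \<le> sup z (n z) \<or> n z \<le> b"
      using dichotomousD [OF dich bz] by simp
    then have "b \<le> z"
      using super_paraorthomodular_absorb [OF sp ab z_def]
        dichotomous_absorb [OF dich ab nab z_def] by blast
    with bz show False ..
  qed
  then show "b \<le> sup a (inf (n a) b)"
    by (simp add: z_def)
qed

theorem conditionally_orthomodular_iff:
  "conditionally_orthomodular \<longleftrightarrow> super_paraorthomodular n \<and> dichotomous"
  using conditionally_orthomodular_imp_super_paraorthomodular
    conditionally_orthomodular_imp_dichotomous
    super_paraorthomodular_dichotomous_imp_conditionally_orthomodular
  by blast

end

theorem theorem3p11:
  fixes n :: "'a::bounded_lattice \<Rightarrow> 'a"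
  assumes "pseudo_kleene n"
  shows "left_residuated_l_groupoid (R_mult n) (R_imp n) \<longleftrightarrow>
    (super_paraorthomodular n \<and>
     (\<forall>x y. \<not> x \<le> y \<longrightarrow> x \<le> sup y (n y) \<or> n y \<le> sup x y))"
proof -
  interpret pseudo_kleene_lattice n
    using assms by unfold_locales
  show ?thesis
    using residuated_iff_conditionally_orthomodular conditionally_orthomodular_iff
    unfolding dichotomous_def by blast
qed

end
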